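(* Let $\sigma:\mathbb{R}\to\mathbb{R}$ be continuous, let $K\subset\mathbb{R}^{d_{in}}$ be compact, and let $F:\mathbb{R}^{d_{in}}\to\mathbb{R}^{d_{out}}$ be a neural network function $F(x)=W_L(A_{L-1}\circ\dots\circ A_1(x))+b_L$ with $L$ layers, where $A_j(x)=\sigma(W_jx+b_j)$, $W_j\in\mathbb{R}^{d_j\times d_{j-1}}$, $b_j\in\mathbb{R}^{d_j}$, $d_0=d_{in}$, $d_L=d_{out}$, and width $\omega_F=\max\{d_1,\dots,d_L\}\le d_{in}$. Regard each $b_j$, $j=1,\dots,L-1$, as a vector in $\mathbb{R}^{d_{in}}$ by padding with zero components, and $W_L$ as a matrix in $\mathbb{R}^{d_{out}\times d_{in}}$ by padding with zero columns. Then for every $\varepsilon>0$ there exist invertible matrices $\tilde W_j\in\mathbb{R}^{d_{in}\times d_{in}}$, $j=1,\dots,L-1$, such that the function $\tilde F(x)=W_L(\tilde A_{L-1}\circ\dots\circ\tilde A_1(x))+b_L$ with $\tilde A_j(x)=\sigma(\tilde W_jx+b_j)$ satisfies $\|\tilde F-F\|_K<\varepsilon$.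
   Context: $\sigma$ is applied componentwise to vectors. For $f:K\to\mathbb{R}^m$, $\|f\|_K=\sup\{\|f(x)\|:x\in K\}$ with $\|\cdot\|$ the Euclidean norm. *)

theory Defs
  imports "HOL-Analysis.Analysis"
begin

text \<open>Vectors of R^k are represented as functions nat => real whose components
with index >= k are 0; a k x p matrix is a function nat => nat => real of which
only the entries (i,l) with i < k, l < p are used.\<close>

definition mat_vec :: "(nat \<Rightarrow> nat \<Rightarrow> real) \<Rightarrow> nat \<Rightarrow> nat \<Rightarrow> (nat \<Rightarrow> real) \<Rightarrow> (nat \<Rightarrow> real)" where
  "mat_vec W q p x = (\<lambda>i. if i < q then (\<Sum>k<p. W i k * x k) else 0)"

definition vec_add :: "nat \<Rightarrow> (nat \<Rightarrow> real) \<Rightarrow> (nat \<Rightarrow> real) \<Rightarrow> (nat \<Rightarrow> real)" where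
  "vec_add q x y = (\<lambda>i. if i < q then x i + y i else 0)"

definition layer :: "(real \<Rightarrow> real) \<Rightarrow> (nat \<Rightarrow> nat \<Rightarrow> real) \<Rightarrow> (nat \<Rightarrow> real) \<Rightarrow> nat \<Rightarrow> nat
    \<Rightarrow> (nat \<Rightarrow> real) \<Rightarrow> (nat \<Rightarrow> real)" where
  "layer \<sigma> W b p q x = (\<lambda>i. if i < q then \<sigma> (vec_add q (mat_vec W q p x) b i) else 0)"

fun hidden :: "(real \<Rightarrow> real) \<Rightarrow> (nat \<Rightarrow> nat \<Rightarrow> nat \<Rightarrow> real) \<Rightarrow> (nat \<Rightarrow> nat \<Rightarrow> real)
    \<Rightarrow> (nat \<Rightarrow> nat) \<Rightarrow> nat \<Rightarrow> (nat \<Rightarrow> real) \<Rightarrow> (nat \<Rightarrow> real)" where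
  "hidden \<sigma> W b d 0 x = x"
| "hidden \<sigma> W b d (Suc j) x = layer \<sigma> (W (Suc j)) (b (Suc j)) (d j) (d (Suc j)) (hidden \<sigma> W b d j x)"

definition network :: "(real \<Rightarrow> real) \<Rightarrow> (nat \<Rightarrow> nat \<Rightarrow> nat \<Rightarrow> real) \<Rightarrow> (nat \<Rightarrow> nat \<Rightarrow> real)
    \<Rightarrow> (nat \<Rightarrow> nat) \<Rightarrow> nat \<Rightarrow> (nat \<Rightarrow> real) \<Rightarrow> (nat \<Rightarrow> real)" where
  "network \<sigma> W b d L x =
     vec_add (d L) (mat_vec (W L) (d L) (d (L - 1)) (hidden \<sigma> W b d (L - 1) x)) (b L)"

definition pad_vec :: "nat \<Rightarrow> (nat \<Rightarrow> real) \<Rightarrow> (nat \<Rightarrow> real)" where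
  "pad_vec q v = (\<lambda>i. if i < q then v i else 0)"

definition pad_cols :: "nat \<Rightarrow> (nat \<Rightarrow> nat \<Rightarrow> real) \<Rightarrow> (nat \<Rightarrow> nat \<Rightarrow> real)" where
  "pad_cols p W = (\<lambda>i k. if k < p then W i k else 0)"

definition mat_invertible :: "nat \<Rightarrow> (nat \<Rightarrow> nat \<Rightarrow> real) \<Rightarrow> bool" where
  "mat_invertible n M \<longleftrightarrow> (\<exists>N.
     (\<forall>i<n. \<forall>k<n. (\<Sum>l<n. M i l * N l k) = (if i = k then 1 else 0)) \<and>
     (\<forall>i<n. \<forall>k<n. (\<Sum>l<n. N i l * M l k) = (if i = k then 1 else 0)))"

definition tilde_network :: "(real \<Rightarrow> real) \<Rightarrow> (nat \<Rightarrow> nat \<Rightarrow> nat \<Rightarrow> real) \<Rightarrow> (nat \<Rightarrow> nat \<Rightarrow> real)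
    \<Rightarrow> (nat \<Rightarrow> nat) \<Rightarrow> nat \<Rightarrow> nat \<Rightarrow> (nat \<Rightarrow> nat \<Rightarrow> nat \<Rightarrow> real) \<Rightarrow> (nat \<Rightarrow> real) \<Rightarrow> (nat \<Rightarrow> real)" where
  "tilde_network \<sigma> W b d L n Wt x =
     vec_add (d L)
       (mat_vec (pad_cols (d (L - 1)) (W L)) (d L) n
          (hidden \<sigma> Wt (\<lambda>j. pad_vec (d j) (b j)) (\<lambda>_. n) (L - 1) x))
       (b L)"

text \<open>Euclidean norm in R^m and sup norm over K (the insert 0 only matters for K = {},
all values being nonnegative).\<close>
definition euclid_norm :: "nat \<Rightarrow> (nat \<Rightarrow> real) \<Rightarrow> real" where
  "euclid_norm m v = sqrt (\<Sum>i<m. (v i)\<^sup>2)"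

definition sup_norm_on :: "(nat \<Rightarrow> real) set \<Rightarrow> nat \<Rightarrow> ((nat \<Rightarrow> real) \<Rightarrow> (nat \<Rightarrow> real)) \<Rightarrow> real" where
  "sup_norm_on K m f = Sup (insert 0 ((\<lambda>x. euclid_norm m (f x)) ` K))"

end

theory Submission
  imports Defs "Jordan_Normal_Form.Char_Poly"
begin

text \<open>Pad every hidden weight matrix W_j with zero rows and columns to a square
d_in x d_in matrix M_j; the network is unchanged. The matrix M_j + \<delta> I is singular only when
\<delta> is a root of the characteristic polynomial of -M_j, so for all but finitely many \<delta> every
M_j + \<delta> I is invertible. The modified network depends continuously on (\<delta>, x), hence
uniformly on the compact set K, and a small admissible \<delta> gives the required approximation.\<close>

definition diag_shift :: "(nat \<Rightarrow> nat \<Rightarrow> real) \<Rightarrow> real \<Rightarrow> nat \<Rightarrow> nat \<Rightarrow> real" where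
  "diag_shift M \<delta> = (\<lambda>i k. M i k + (if i = k then \<delta> else 0))"

definition pad_weights ::
    "(nat \<Rightarrow> nat) \<Rightarrow> (nat \<Rightarrow> nat \<Rightarrow> nat \<Rightarrow> real) \<Rightarrow> nat \<Rightarrow> nat \<Rightarrow> nat \<Rightarrow> real" where
  "pad_weights d W = (\<lambda>j i k. if i < d j \<and> k < d (j - 1) then W j i k else 0)"

lemma mat_invertible_if_det_nonzero:
  fixes M :: "nat \<Rightarrow> nat \<Rightarrow> real"
  assumes "det (mat n n (\<lambda>(i, k). M i k)) \<noteq> 0"
  shows "mat_invertible n M"
proof -
  let ?A = "mat n n (\<lambda>(i, k). M i k)"
  obtain B where B: "B \<in> carrier_mat n n" "?A * B = 1\<^sub>m n" "B * ?A = 1\<^sub>m n"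
    using det_non_zero_imp_unit[of ?A n, OF _ assms] by (auto simp: Units_def ring_mat_def)
  have "(\<Sum>l<n. M i l * B $$ (l, k)) = (?A * B) $$ (i, k)"
    and "(\<Sum>l<n. B $$ (i, l) * M l k) = (B * ?A) $$ (i, k)" if "i < n" "k < n" for i k
    using that B(1) by (auto simp: scalar_prod_def atLeast0LessThan)
  then show ?thesis
    unfolding mat_invertible_def using B(2,3) by (intro exI[of _ "\<lambda>i k. B $$ (i, k)"]) auto
qed

lemma finite_not_invertible_diag_shift: "finite {\<delta>. \<not> mat_invertible n (diag_shift M \<delta>)}"
proof -
  let ?B = "- mat n n (\<lambda>(i, k). M i k)"
  have B: "?B \<in> carrier_mat n n" by simp
  have "det (mat n n (\<lambda>(i, k). diag_shift M \<delta> i k)) = poly (char_poly ?B) \<delta>" for \<delta>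
  proof -
    have "mat n n (\<lambda>(i, k). diag_shift M \<delta> i k) = - char_matrix ?B \<delta>"
      by (rule eq_matI) (auto simp: char_matrix_def diag_shift_def)
    then show ?thesis by (simp add: char_poly_matrix[OF B])
  qed
  then have "{\<delta>. \<not> mat_invertible n (diag_shift M \<delta>)} \<subseteq> {\<delta>. poly (char_poly ?B) \<delta> = 0}"
    using mat_invertible_if_det_nonzero[of n "diag_shift M _"] by auto
  moreover have "char_poly ?B \<noteq> 0"
    using degree_monic_char_poly[OF B] by auto
  ultimately show ?thesis
    using poly_roots_finite finite_subset by blast
qed

lemma continuous_on_hidden:
  fixes W :: "'a::topological_space \<Rightarrow> nat \<Rightarrow> nat \<Rightarrow> nat \<Rightarrow> real"
    and x :: "'a \<Rightarrow> nat \<Rightarrow> real"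
  assumes \<sigma>: "continuous_on UNIV \<sigma>"
    and W: "\<And>j i k. continuous_on S (\<lambda>p. W p j i k)"
    and x: "\<And>i. continuous_on S (\<lambda>p. x p i)"
  shows "continuous_on S (\<lambda>p. hidden \<sigma> (W p) b d j (x p) i)"
proof (induction j arbitrary: i)
  case 0
  show ?case using x by simp
next
  case (Suc j)
  show ?case
    unfolding hidden.simps layer_def vec_add_def mat_vec_def
    by (cases "i < d (Suc j)")
      (simp_all, intro continuous_on_compose2[OF \<sigma> _ subset_UNIV] continuous_intros W Suc.IH)
qed

lemma continuous_on_tilde_network:
  fixes Wt :: "'a::topological_space \<Rightarrow> nat \<Rightarrow> nat \<Rightarrow> nat \<Rightarrow> real"
    and x :: "'a \<Rightarrow> nat \<Rightarrow> real"
  assumes "continuous_on UNIV \<sigma>"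
    and "\<And>j i k. continuous_on S (\<lambda>p. Wt p j i k)"
    and "\<And>i. continuous_on S (\<lambda>p. x p i)"
  shows "continuous_on S (\<lambda>p. tilde_network \<sigma> W b d L n (Wt p) (x p) i)"
  unfolding tilde_network_def vec_add_def mat_vec_def
  by (cases "i < d L") (simp_all, intro continuous_intros continuous_on_hidden assms)

lemma continuous_on_tilde_network_diag_shift:
  fixes \<delta> :: "'a::topological_space \<Rightarrow> real" and x :: "'a \<Rightarrow> nat \<Rightarrow> real"
  assumes "continuous_on UNIV \<sigma>" "continuous_on S \<delta>" "\<And>i. continuous_on S (\<lambda>p. x p i)"
  shows "continuous_on S (\<lambda>p. tilde_network \<sigma> W b d L n (\<lambda>j. diag_shift (M j) (\<delta> p)) (x p) i)"
proof (rule continuous_on_tilde_network[OF assms(1) _ assms(3)])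
  show "continuous_on S (\<lambda>p. diag_shift (M j) (\<delta> p) i k)" for j i k
    unfolding diag_shift_def using assms(2) by (cases "i = k") (simp_all add: continuous_on_add)
qed

lemma sum_padded_coeffs:
  fixes f :: "nat \<Rightarrow> 'a::semiring_0"
  assumes "m \<le> n"
  shows "(\<Sum>k<n. (if k < m then a k else 0) * f k) = (\<Sum>k<m. a k * f k)"
proof -
  have "(\<Sum>k<n. (if k < m then a k else 0) * f k) = (\<Sum>k<n. if k < m then a k * f k else 0)"
    by (intro sum.cong) auto
  also have "\<dots> = (\<Sum>k\<in>{k\<in>{..<n}. k < m}. a k * f k)"
    by (rule sum.inter_filter[symmetric]) simp
  also have "{k\<in>{..<n}. k < m} = {..<m}" using assms by auto
  finally show ?thesis .
qed

text \<open>The padded rows of a layer output \<sigma> 0, which the zero columns of the next layer ignore.\<close>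
lemma hidden_pad_weights:
  assumes "d 0 = n" "\<forall>j'\<in>{1..j}. d j' \<le> n" "i < d j"
  shows "hidden \<sigma> (pad_weights d W) (\<lambda>j. pad_vec (d j) (b j)) (\<lambda>_. n) j x i
    = hidden \<sigma> W b d j x i"
  using assms(2,3)
proof (induction j arbitrary: i)
  case 0
  then show ?case by simp
next
  case (Suc j)
  have "d j \<le> n" using assms(1) Suc.prems(1) by (cases j) auto
  moreover have "i < n" using Suc.prems(1)[rule_format, of "Suc j"] Suc.prems(2) by simp
  ultimately show ?case
    using Suc
    by (simp add: layer_def vec_add_def mat_vec_def pad_vec_def pad_weights_def sum_padded_coeffs)
qed

lemma tilde_network_pad_weights:
  assumes "d 0 = n" "\<forall>j\<in>{1..L-1}. d j \<le> n"
  shows "tilde_network \<sigma> W b d L n (pad_weights d W) x = network \<sigma> W b d L x"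
proof -
  have "d (L - 1) \<le> n" using assms by (cases "L - 1") auto
  moreover have "hidden \<sigma> (pad_weights d W) (\<lambda>j. pad_vec (d j) (b j)) (\<lambda>_. n) (L - 1) x k
      = hidden \<sigma> W b d (L - 1) x k" if "k < d (L - 1)" for k
    using hidden_pad_weights[of d n "L - 1"] assms that by simp
  ultimately show ?thesis
    by (auto simp: tilde_network_def network_def vec_add_def mat_vec_def pad_cols_def
        sum_padded_coeffs intro!: sum.cong)
qed

lemma uniformly_continuous_in_parameter_on_compact:
  fixes g :: "real \<times> 'a::metric_space \<Rightarrow> 'b::metric_space"
  assumes "continuous_on UNIV g" "compact K" "e > 0"
  obtains \<eta> where "\<eta> > 0" "\<And>\<delta> x. \<bar>\<delta>\<bar> < \<eta> \<Longrightarrow> x \<in> K \<Longrightarrow> dist (g (\<delta>, x)) (g (0, x)) < e"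
proof -
  have "uniformly_continuous_on (cball 0 1 \<times> K) g"
    using assms(1,2)
    by (intro compact_uniformly_continuous compact_Times) (auto intro: continuous_on_subset)
  then obtain \<eta> where "\<eta> > 0"
    and \<eta>: "\<And>p q. p \<in> cball 0 1 \<times> K \<Longrightarrow> q \<in> cball 0 1 \<times> K \<Longrightarrow> dist q p < \<eta>
      \<Longrightarrow> dist (g q) (g p) < e"
    using assms(3) unfolding uniformly_continuous_on_def by metis
  show thesis
  proof
    show "min 1 \<eta> > 0" using \<open>\<eta> > 0\<close> by simp
    fix \<delta> x assume "\<bar>\<delta>\<bar> < min 1 \<eta>" "x \<in> K"
    then show "dist (g (\<delta>, x)) (g (0, x)) < e"
      by (intro \<eta>) (auto simp: dist_Pair_Pair)
  qed
qed

lemma tilde_network_diag_shift_uniformly_close: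
  assumes "continuous_on UNIV \<sigma>" "compact K" "e > 0"
  obtains \<eta> where "\<eta> > 0" "\<And>\<delta> x. \<bar>\<delta>\<bar> < \<eta> \<Longrightarrow> x \<in> K \<Longrightarrow>
    euclid_norm m (\<lambda>i. tilde_network \<sigma> W b d L n (\<lambda>j. diag_shift (M j) \<delta>) x i
      - tilde_network \<sigma> W b d L n (\<lambda>j. diag_shift (M j) 0) x i) < e"
proof -
  define g where "g p = euclid_norm m
    (\<lambda>i. tilde_network \<sigma> W b d L n (\<lambda>j. diag_shift (M j) (fst p)) (snd p) i
      - tilde_network \<sigma> W b d L n (\<lambda>j. diag_shift (M j) 0) (snd p) i)" for p :: "real \<times> (nat \<Rightarrow> real)"
  have "continuous_on UNIV (\<lambda>p. snd p i)" for i :: nat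
    by (rule continuous_on_product_then_coordinatewise[OF continuous_on_snd[OF continuous_on_id]])
  then have "continuous_on UNIV g"
    unfolding g_def euclid_norm_def
    by (intro continuous_intros continuous_on_tilde_network_diag_shift assms(1))
  then obtain \<eta> where "\<eta> > 0"
    and \<eta>: "\<And>\<delta> x. \<bar>\<delta>\<bar> < \<eta> \<Longrightarrow> x \<in> K \<Longrightarrow> dist (g (\<delta>, x)) (g (0, x)) < e"
    using uniformly_continuous_in_parameter_on_compact[OF _ assms(2,3)] by blast
  show thesis
  proof (rule that[OF \<open>\<eta> > 0\<close>])
    fix \<delta> x assume "\<bar>\<delta>\<bar> < \<eta>" "x \<in> K"
    then show "euclid_norm m (\<lambda>i. tilde_network \<sigma> W b d L n (\<lambda>j. diag_shift (M j) \<delta>) x i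
      - tilde_network \<sigma> W b d L n (\<lambda>j. diag_shift (M j) 0) x i) < e"
      using \<eta>[of \<delta> x] by (simp add: g_def euclid_norm_def dist_real_def)
  qed
qed

lemma sup_norm_on_le:
  assumes "0 \<le> c" "\<And>x. x \<in> K \<Longrightarrow> euclid_norm m (f x) \<le> c"
  shows "sup_norm_on K m f \<le> c"
  unfolding sup_norm_on_def using assms by (intro cSup_least) auto

theorem proposition8:
  fixes \<sigma> :: "real \<Rightarrow> real"
    and K :: "(nat \<Rightarrow> real) set"
    and W :: "nat \<Rightarrow> nat \<Rightarrow> nat \<Rightarrow> real"
    and b :: "nat \<Rightarrow> nat \<Rightarrow> real"
    and d :: "nat \<Rightarrow> nat"
    and L d_in d_out :: nat
  assumes "continuous_on UNIV \<sigma>"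
    and "compact K"
    and "K \<subseteq> {x. \<forall>i\<ge>d_in. x i = 0}"
    and "L \<ge> 1"
    and "d 0 = d_in"
    and "d L = d_out"
    and "\<forall>j\<in>{1..L}. d j \<le> d_in"
    and "\<epsilon> > 0"
  shows "\<exists>Wt :: nat \<Rightarrow> nat \<Rightarrow> nat \<Rightarrow> real.
           (\<forall>j\<in>{1..L-1}. mat_invertible d_in (Wt j)) \<and>
           sup_norm_on K d_out
             (\<lambda>x. (\<lambda>i. tilde_network \<sigma> W b d L d_in Wt x i - network \<sigma> W b d L x i)) < \<epsilon>"
proof -
  define Wt where "Wt \<delta> = (\<lambda>j. diag_shift (pad_weights d W j) \<delta>)" for \<delta>
  have "Wt 0 = pad_weights d W"
    by (simp add: Wt_def diag_shift_def)
  moreover have "\<forall>j\<in>{1..L-1}. d j \<le> d_in"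
    using assms(7) by auto
  ultimately have network_eq: "network \<sigma> W b d L x = tilde_network \<sigma> W b d L d_in (Wt 0) x" for x
    using tilde_network_pad_weights[of d d_in L \<sigma> W b x] assms(5) by simp
  obtain \<eta> where "\<eta> > 0" and \<eta>: "\<And>\<delta> x. \<bar>\<delta>\<bar> < \<eta> \<Longrightarrow> x \<in> K \<Longrightarrow>
      euclid_norm d_out (\<lambda>i. tilde_network \<sigma> W b d L d_in (Wt \<delta>) x i
        - tilde_network \<sigma> W b d L d_in (Wt 0) x i) < \<epsilon> / 2"
    using tilde_network_diag_shift_uniformly_close[OF assms(1,2) half_gt_zero[OF assms(8)]]
    unfolding Wt_def by blast
  define S where "S = (\<Union>j\<in>{1..L-1}. {\<delta>. \<not> mat_invertible d_in (Wt \<delta> j)})"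
  have "finite S"
    unfolding S_def Wt_def by (intro finite_UN_I finite_atLeastAtMost finite_not_invertible_diag_shift)
  then obtain \<delta> where \<delta>: "\<delta> \<in> {0<..<\<eta>}" "\<delta> \<notin> S"
    using Diff_infinite_finite[OF _ infinite_Ioo[OF \<open>\<eta> > 0\<close>]]
    by (metis Diff_iff ex_in_conv finite.emptyI)
  have "euclid_norm d_out (\<lambda>i. tilde_network \<sigma> W b d L d_in (Wt \<delta>) x i - network \<sigma> W b d L x i)
      \<le> \<epsilon> / 2" if "x \<in> K" for x
    using \<eta>[OF _ that, of \<delta>] \<delta>(1) by (simp add: network_eq)
  then have "sup_norm_on K d_out
      (\<lambda>x i. tilde_network \<sigma> W b d L d_in (Wt \<delta>) x i - network \<sigma> W b d L x i) \<le> \<epsilon> / 2"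
    using assms(8) by (intro sup_norm_on_le) auto
  then show ?thesis
    using \<delta>(2) assms(8) unfolding S_def by (intro exI[of _ "Wt \<delta>"]) auto
qed

end
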